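(* Let $p\in W^{1,\infty}(\mathbb{R}^+\times\mathbb{R}^+)$ with $p\ge0$, let $\alpha:\mathbb{R}^+\to[0,\infty)$ be bounded and of bounded variation on $\mathbb{R}^+$, and let $(n^0_j)_{j\ge1}$ be nonnegative with $\|n^0\|_1<\infty$, $\|n^0\|_\infty<\infty$ and $TV(n^0)<\infty$. Then there exist $\tau_0>0$ and constants $C_1,C_2>0$, depending only on $p$, $\alpha$, $\|n^0\|_1$ and $\|n^0\|_\infty$, such that whenever $\Delta t\le\tau_0$ and the DDM CFL condition holds, the DDM upwind scheme satisfies for every $m\in\mathbb{N}$, with $T=m\Delta t$, $$TV(n^m)\le e^{C_1T}\,TV(n^0)+C_2\left(e^{C_1T}-1\right).$$
   Context: DDM upwind scheme: fix $\Delta s,\Delta t>0$; $s_j=(j-\tfrac12)\Delta s$, $j\in\{1,2,\dots\}$; $t^m=m\Delta t$; $\alpha_k=\alpha(t^k)$. For sequences, $\|u\|_1=\sum_{j\ge1}\Delta s|u_j|$, $\|u\|_\infty=\sup_j|u_j|$. Set $X^0=0$, $N^0=\sum_{j\ge1}\Delta s\,p(s_j,0)n^0_j$. For $m\ge0$: with $n^m_0:=N^m$, $n^{m+1}_j=n^m_j-\frac{\Delta t}{\Delta s}(n^m_j-n^m_{j-1})-\Delta t\,p(s_j,X^m)n^m_j$ for $j\ge1$; then $X^{m+1}\ge0$ is the (unique under the CFL condition) solution of $X^{m+1}=\frac{\Delta t}{2}\Big(\alpha_0\sum_{j\ge1}\Delta s\,p(s_j,X^{m+1})n^{m+1}_j+\sum_{k=0}^mN^k\alpha_{m+1-k}\Big)$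 and $N^{m+1}=\sum_{j\ge1}\Delta s\,p(s_j,X^{m+1})n^{m+1}_j$. DDM CFL condition: $\Delta t<\min\Big\{\big(\frac1{\Delta s}+\|p\|_\infty\big)^{-1},\ \frac{2}{\alpha_0\|\partial_Xp\|_\infty\|n^0\|_1}\Big\}$ (second term $+\infty$ if its denominator vanishes). Discrete total variation including the boundary value: $TV(n^m)=\sum_{j\ge0}|n^m_{j+1}-n^m_j|$ with $n^m_0=N^m$. *)

theory Defs
  imports "HOL-Analysis.Analysis"
begin

text \<open>The quadrant R+ x R+ (closed; W^{1,inf} functions have a Lipschitz representative
  that extends continuously to the closure).\<close>
definition quadrant :: "(real \<times> real) set" where
  "quadrant = {0..} \<times> {0..}"

text \<open>W^{1,inf}(R+ x R+): bounded and Lipschitz (Lipschitz representative).\<close>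
definition W1inf :: "(real \<Rightarrow> real \<Rightarrow> real) \<Rightarrow> bool" where
  "W1inf p \<longleftrightarrow> bounded ((\<lambda>(s,x). p s x) ` quadrant)
      \<and> (\<exists>L. L-lipschitz_on quadrant (\<lambda>(s,x). p s x))"

definition pinf :: "(real \<Rightarrow> real \<Rightarrow> real) \<Rightarrow> real" where
  "pinf p = (SUP z\<in>quadrant. \<bar>(\<lambda>(s,x). p s x) z\<bar>)"

text \<open>sup norm of the partial derivative in X: best Lipschitz constant in X, uniformly in s\<close>
definition dXpinf :: "(real \<Rightarrow> real \<Rightarrow> real) \<Rightarrow> real" where
  "dXpinf p = (SUP z\<in>{(s,x,y). s \<ge> 0 \<and> x \<ge> 0 \<and> y \<ge> 0 \<and> x \<noteq> y}.
      (case z of (s,x,y) \<Rightarrow> \<bar>p s x - p s y\<bar> / \<bar>x - y\<bar>))"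

definition bounded_variation_on :: "real set \<Rightarrow> (real \<Rightarrow> real) \<Rightarrow> bool" where
  "bounded_variation_on S f \<longleftrightarrow> (\<exists>V. \<forall>(n::nat) (t::nat \<Rightarrow> real).
      (\<forall>i\<le>n. t i \<in> S) \<and> (\<forall>i<n. t i \<le> t (Suc i)) \<longrightarrow>
      (\<Sum>i<n. \<bar>f (t (Suc i)) - f (t i)\<bar>) \<le> V)"

definition sgrid :: "real \<Rightarrow> nat \<Rightarrow> real" where
  "sgrid ds j = (real j - 1/2) * ds"

text \<open>discrete norms over j >= 1 (index 0 is the boundary value)\<close>
definition norm1 :: "real \<Rightarrow> (nat \<Rightarrow> real) \<Rightarrow> real" where
  "norm1 ds u = (\<Sum>j. ds * \<bar>u (Suc j)\<bar>)"

definition norminf :: "(nat \<Rightarrow> real) \<Rightarrow> real" where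
  "norminf u = (SUP j. \<bar>u (Suc j)\<bar>)"

text \<open>discrete total variation including boundary value u 0\<close>
definition TV :: "(nat \<Rightarrow> real) \<Rightarrow> real" where
  "TV u = (\<Sum>j. \<bar>u (Suc j) - u j\<bar>)"

definition TV_finite :: "(nat \<Rightarrow> real) \<Rightarrow> bool" where
  "TV_finite u \<longleftrightarrow> summable (\<lambda>j. \<bar>u (Suc j) - u j\<bar>)"

text \<open>The DDM upwind scheme (n m 0 = N m is the boundary value, n m j for j >= 1 the grid values).\<close>
definition DDM_scheme :: "(real \<Rightarrow> real \<Rightarrow> real) \<Rightarrow> (real \<Rightarrow> real) \<Rightarrow> real \<Rightarrow> real
    \<Rightarrow> (nat \<Rightarrow> nat \<Rightarrow> real) \<Rightarrow> (nat \<Rightarrow> real) \<Rightarrow> (nat \<Rightarrow> real) \<Rightarrow> bool" where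
  "DDM_scheme p \<alpha> ds dt n X N \<longleftrightarrow>
     X 0 = 0 \<and>
     N 0 = (\<Sum>j. ds * p (sgrid ds (Suc j)) 0 * n 0 (Suc j)) \<and>
     (\<forall>m. n m 0 = N m) \<and>
     (\<forall>m j. j \<ge> 1 \<longrightarrow>
        n (Suc m) j = n m j - dt / ds * (n m j - n m (j - 1)) - dt * p (sgrid ds j) (X m) * n m j) \<and>
     (\<forall>m. X (Suc m) \<ge> 0 \<and>
        X (Suc m) = dt / 2 * (\<alpha> 0 * (\<Sum>j. ds * p (sgrid ds (Suc j)) (X (Suc m)) * n (Suc m) (Suc j))
                     + (\<Sum>k\<le>m. N k * \<alpha> (real (Suc m - k) * dt))) \<and>
        N (Suc m) = (\<Sum>j. ds * p (sgrid ds (Suc j)) (X (Suc m)) * n (Suc m) (Suc j)))"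

text \<open>DDM CFL condition (second bound is +inf when its denominator vanishes)\<close>
definition DDM_CFL :: "(real \<Rightarrow> real \<Rightarrow> real) \<Rightarrow> (real \<Rightarrow> real) \<Rightarrow> real \<Rightarrow> real \<Rightarrow> (nat \<Rightarrow> real) \<Rightarrow> bool" where
  "DDM_CFL p \<alpha> ds dt n0 \<longleftrightarrow>
     dt < inverse (1 / ds + pinf p) \<and>
     (\<alpha> 0 * dXpinf p * norm1 ds n0 = 0 \<or> dt < 2 / (\<alpha> 0 * dXpinf p * norm1 ds n0))"

end

theory Submission
  imports Defs
begin

text \<open>Under the CFL condition one upwind step writes every new value n^{m+1}_j, j \<ge> 1, as a
  nonnegative combination of n^m_j and n^m_{j-1}. Hence positivity and mass are preserved, and
  the interior total variation can only grow through the s-dependence of the rate p, by O(\<Delta>t)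
  times the mass. The delicate term is the boundary jump |N^{m+1} - N^m|: N depends
  Lipschitz-continuously on X, while X^{m+1} - X^m is bounded by \<alpha>_0 |N^{m+1} - N^m| plus the
  variation of \<alpha> against the bounded history of N. For small \<Delta>t this implicit loop closes,
  giving TV(n^{m+1}) + 1 \<le> (1 + C \<Delta>t) (TV(n^m) + 1), and a discrete Gronwall argument yields
  the exponential bound with C_2 = 1.\<close>

lemma sums_telescope_shifted:
  fixes u :: "nat \<Rightarrow> 'a::real_normed_vector"
  assumes "summable (\<lambda>j. u (Suc j))"
  shows "(\<lambda>j. u (Suc j) - u j) sums (- u 0)"
proof -
  have "u \<longlonglongrightarrow> 0"
    using summable_LIMSEQ_zero[OF assms] by (rule filterlim_sequentially_Suc[THEN iffD1])
  from telescope_sums[OF this] show ?thesis by simp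
qed

lemma TV_nonneg: "TV_finite u \<Longrightarrow> 0 \<le> TV u"
  unfolding TV_def TV_finite_def by (intro suminf_nonneg) auto

definition mass :: "real \<Rightarrow> (nat \<Rightarrow> real) \<Rightarrow> real" where
  "mass ds u = (\<Sum>j. ds * u (Suc j))"

definition weighted_mass :: "real \<Rightarrow> (nat \<Rightarrow> real) \<Rightarrow> (nat \<Rightarrow> real) \<Rightarrow> real" where
  "weighted_mass ds q u = (\<Sum>j. ds * q (Suc j) * u (Suc j))"

lemma mass_nonneg:
  assumes "ds \<ge> 0" "\<And>j. j \<ge> 1 \<Longrightarrow> 0 \<le> u j" "summable (\<lambda>j. u (Suc j))"
  shows "0 \<le> mass ds u"
  unfolding mass_def using assms by (intro suminf_nonneg summable_mult) auto

context
  fixes ds :: real and u :: "nat \<Rightarrow> real"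
  assumes ds_pos: "ds > 0" and u_nonneg: "\<And>j. j \<ge> 1 \<Longrightarrow> 0 \<le> u j"
    and u_summable: "summable (\<lambda>j. u (Suc j))"
begin

lemma weighted_term_le:
  fixes q :: "nat \<Rightarrow> real"
  assumes "\<And>j. j \<ge> 1 \<Longrightarrow> 0 \<le> q j \<and> q j \<le> P"
  shows "\<bar>ds * q (Suc j) * u (Suc j)\<bar> \<le> P * (ds * u (Suc j))"
  using assms[of "Suc j"] u_nonneg[of "Suc j"] ds_pos
  by (simp add: abs_mult mult_right_mono mult_left_mono algebra_simps)

lemma summable_weighted_mass:
  fixes q :: "nat \<Rightarrow> real"
  assumes "\<And>j. j \<ge> 1 \<Longrightarrow> 0 \<le> q j \<and> q j \<le> P"
  shows "summable (\<lambda>j. ds * q (Suc j) * u (Suc j))"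
  by (rule summable_comparison_test'[where g = "\<lambda>j. P * (ds * u (Suc j))"])
    (use u_summable weighted_term_le[of q, OF assms] in auto)

lemma weighted_mass_nonneg:
  fixes q :: "nat \<Rightarrow> real"
  assumes "\<And>j. j \<ge> 1 \<Longrightarrow> 0 \<le> q j \<and> q j \<le> P"
  shows "0 \<le> weighted_mass ds q u"
  unfolding weighted_mass_def using summable_weighted_mass[of q, OF assms] assms u_nonneg ds_pos
  by (intro suminf_nonneg) auto

lemma weighted_mass_le:
  fixes q :: "nat \<Rightarrow> real"
  assumes "\<And>j. j \<ge> 1 \<Longrightarrow> 0 \<le> q j \<and> q j \<le> P"
  shows "weighted_mass ds q u \<le> P * mass ds u"
proof -
  have "weighted_mass ds q u \<le> (\<Sum>j. P * (ds * u (Suc j)))"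
    unfolding weighted_mass_def
    using summable_weighted_mass[of q, OF assms] u_summable weighted_term_le[of q, OF assms]
    by (intro suminf_le) (auto simp: abs_le_iff)
  also have "\<dots> = P * mass ds u"
    unfolding mass_def using u_summable by (intro suminf_mult) simp
  finally show ?thesis .
qed

lemma weighted_mass_coefficient_diff:
  fixes q q' :: "nat \<Rightarrow> real"
  assumes q_bounds: "\<And>j. j \<ge> 1 \<Longrightarrow> 0 \<le> q j \<and> q j \<le> P"
    and q'_bounds: "\<And>j. j \<ge> 1 \<Longrightarrow> 0 \<le> q' j \<and> q' j \<le> P"
    and E: "\<And>j. j \<ge> 1 \<Longrightarrow> \<bar>q' j - q j\<bar> \<le> E"
  shows "\<bar>weighted_mass ds q' u - weighted_mass ds q u\<bar> \<le> E * mass ds u"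
proof -
  have "weighted_mass ds q' u - weighted_mass ds q u
      = (\<Sum>j. (q' (Suc j) - q (Suc j)) * (ds * u (Suc j)))"
    unfolding weighted_mass_def
    using suminf_diff[OF summable_weighted_mass[of q', OF q'_bounds]
        summable_weighted_mass[of q, OF q_bounds]]
    by (simp add: algebra_simps)
  also have "\<bar>\<dots>\<bar> \<le> (\<Sum>j. E * (ds * u (Suc j)))"
    using E u_nonneg ds_pos u_summable
    by (intro norm_suminf_le[where 'a=real, unfolded real_norm_def])
      (auto simp: abs_mult intro!: mult_right_mono)
  also have "\<dots> = E * mass ds u"
    unfolding mass_def using u_summable by (intro suminf_mult) simp
  finally show ?thesis .
qed

end

section \<open>One upwind step\<close>

locale upwind_step =
  fixes u v q :: "nat \<Rightarrow> real" and lam dt ds P K :: real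
  assumes ds_pos: "ds > 0" and dt_pos: "dt > 0" and lam_eq: "lam = dt / ds"
    and cfl: "lam + dt * P \<le> 1"
    and q_bounds: "\<And>j. j \<ge> 1 \<Longrightarrow> 0 \<le> q j \<and> q j \<le> P"
    and q_lipschitz: "\<And>j. j \<ge> 1 \<Longrightarrow> \<bar>q (Suc j) - q j\<bar> \<le> K * ds"
    and u_nonneg: "\<And>j. 0 \<le> u j"
    and u_summable: "summable (\<lambda>j. u (Suc j))"
    and u_TV: "TV_finite u"
    and upwind: "\<And>j. j \<ge> 1 \<Longrightarrow> v j = u j - lam * (u j - u (j - 1)) - dt * q j * u j"
begin

lemma lam_nonneg: "lam \<ge> 0"
  using lam_eq ds_pos dt_pos by simp

lemma ds_times_lam: "ds * lam = dt"
  using lam_eq ds_pos by simp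

lemma v_Suc: "v (Suc j) = (1 - lam - dt * q (Suc j)) * u (Suc j) + lam * u j"
  using upwind[of "Suc j"] by (simp add: algebra_simps)

text \<open>The CFL condition makes the update monotone: it is the nonnegative combination of \<open>u j\<close>
  and \<open>u (j - 1)\<close> with weights \<open>1 - lam - dt * q j\<close> and \<open>lam\<close> displayed in \<open>v_Suc\<close>.\<close>

lemma upwind_weight_bounds:
  assumes "j \<ge> 1"
  shows "0 \<le> 1 - lam - dt * q j" "1 - lam - dt * q j \<le> 1 - lam"
proof -
  have "0 \<le> dt * q j" "dt * q j \<le> dt * P"
    using q_bounds[OF assms] dt_pos by (auto intro: mult_left_mono)
  then show "0 \<le> 1 - lam - dt * q j" "1 - lam - dt * q j \<le> 1 - lam"
    using cfl by linarith+
qed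

lemma v_nonneg: "j \<ge> 1 \<Longrightarrow> 0 \<le> v j"
  using upwind_weight_bounds lam_nonneg u_nonneg
  by (cases j) (auto simp: v_Suc intro!: add_nonneg_nonneg mult_nonneg_nonneg)

lemma v_summable: "summable (\<lambda>j. v (Suc j))"
proof (rule summable_comparison_test'[where g = "\<lambda>j. u (Suc j) + lam * u j"])
  show "summable (\<lambda>j. u (Suc j) + lam * u j)"
    using u_summable summable_Suc_iff by (intro summable_add summable_mult) blast+
  fix j
  have "(1 - lam - dt * q (Suc j)) * u (Suc j) \<le> u (Suc j)"
    using upwind_weight_bounds[of "Suc j"] u_nonneg[of "Suc j"] lam_nonneg
    by (simp add: mult_left_le_one_le)
  then show "norm (v (Suc j)) \<le> u (Suc j) + lam * u j"
    using v_nonneg[of "Suc j"] v_Suc[of j] by simp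
qed

lemma mass_balance: "mass ds v = mass ds u + dt * u 0 - dt * weighted_mass ds q u"
proof -
  have "(\<lambda>j. ds * v (Suc j)) =
      (\<lambda>j. ds * u (Suc j) - dt * (u (Suc j) - u j) - dt * (ds * q (Suc j) * u (Suc j)))"
    using ds_times_lam by (auto simp: upwind algebra_simps)
  moreover have "\<dots> sums (mass ds u - dt * (- u 0) - dt * weighted_mass ds q u)"
    unfolding mass_def weighted_mass_def
    using u_summable ds_pos u_nonneg q_bounds
    by (intro sums_diff sums_mult summable_sums summable_mult sums_telescope_shifted
        summable_weighted_mass[of ds u q P]) auto
  ultimately show ?thesis
    unfolding mass_def[of ds v] by (simp add: sums_iff)
qed

lemma TV_interior_increment_le:
  "\<bar>v (Suc (Suc j)) - v (Suc j)\<bar> \<le> (1 - lam) * \<bar>u (Suc (Suc j)) - u (Suc j)\<bar>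
     + lam * \<bar>u (Suc j) - u j\<bar> + dt * K * (ds * u (Suc j))"
proof -
  have split: "v (Suc (Suc j)) - v (Suc j) =
      (1 - lam - dt * q (Suc (Suc j))) * (u (Suc (Suc j)) - u (Suc j))
      + lam * (u (Suc j) - u j) + dt * ((q (Suc j) - q (Suc (Suc j))) * u (Suc j))"
    using v_Suc[of j] v_Suc[of "Suc j"] by (simp add: algebra_simps)
  have weight_term: "\<bar>(1 - lam - dt * q (Suc (Suc j))) * (u (Suc (Suc j)) - u (Suc j))\<bar>
      \<le> (1 - lam) * \<bar>u (Suc (Suc j)) - u (Suc j)\<bar>"
    using upwind_weight_bounds[of "Suc (Suc j)"] by (simp add: abs_mult mult_right_mono)
  have lam_term: "\<bar>lam * (u (Suc j) - u j)\<bar> \<le> lam * \<bar>u (Suc j) - u j\<bar>"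
    using lam_nonneg by (simp add: abs_mult)
  have "\<bar>(q (Suc j) - q (Suc (Suc j))) * u (Suc j)\<bar> \<le> K * ds * u (Suc j)"
    using q_lipschitz[of "Suc j"] u_nonneg[of "Suc j"]
    by (simp add: abs_mult abs_minus_commute mult_right_mono)
  then have rate_term:
    "\<bar>dt * ((q (Suc j) - q (Suc (Suc j))) * u (Suc j))\<bar> \<le> dt * K * (ds * u (Suc j))"
    using dt_pos by (simp add: abs_mult mult_left_mono mult.assoc)
  have triangle: "\<bar>a + b + c\<bar> \<le> \<bar>a\<bar> + \<bar>b\<bar> + \<bar>c\<bar>" for a b c :: real
    by linarith
  show ?thesis
    unfolding split
    by (rule order_trans[OF triangle add_mono[OF add_mono[OF weight_term lam_term] rate_term]])
qed

lemma TV_boundary_increment_le: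
  "\<bar>v 1 - v 0\<bar> \<le> (1 - lam) * \<bar>u 1 - u 0\<bar> + \<bar>u 0 - v 0\<bar> + dt * P * u 0"
proof -
  have split: "v 1 - v 0 = (1 - lam - dt * q 1) * (u 1 - u 0) + (u 0 - v 0) - dt * q 1 * u 0"
    using v_Suc[of 0] by (simp add: algebra_simps)
  have "\<bar>(1 - lam - dt * q 1) * (u 1 - u 0)\<bar> \<le> (1 - lam) * \<bar>u 1 - u 0\<bar>"
    using upwind_weight_bounds[of 1] by (simp add: abs_mult mult_right_mono)
  moreover have "0 \<le> dt * q 1 * u 0" "dt * q 1 * u 0 \<le> dt * P * u 0"
    using q_bounds[of 1] u_nonneg[of 0] dt_pos by (auto intro: mult_right_mono)
  ultimately show ?thesis
    unfolding split by linarith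
qed

lemma TV_tail_summable: "summable (\<lambda>j. \<bar>u (Suc (Suc j)) - u (Suc j)\<bar>)"
  using u_TV summable_Suc_iff[of "\<lambda>j. \<bar>u (Suc j) - u j\<bar>"] by (simp add: TV_finite_def)

lemma TV_step:
  shows TV_finite_v: "TV_finite v"
    and TV_v_le: "TV v \<le> TV u + dt * K * mass ds u + \<bar>u 0 - v 0\<bar> + dt * P * u 0"
proof -
  define bound where "bound j = (1 - lam) * \<bar>u (Suc (Suc j)) - u (Suc j)\<bar>
     + lam * \<bar>u (Suc j) - u j\<bar> + dt * K * (ds * u (Suc j))" for j
  have "bound sums
      ((1 - lam) * (\<Sum>j. \<bar>u (Suc (Suc j)) - u (Suc j)\<bar>) + lam * TV u + dt * K * mass ds u)"
    unfolding bound_def TV_def mass_def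
    using sums_add[OF sums_add[OF sums_mult[OF summable_sums[OF TV_tail_summable], of "1 - lam"]
          sums_mult[OF summable_sums[OF u_TV[unfolded TV_finite_def]], of lam]]
        sums_mult[OF summable_sums[OF summable_mult[OF u_summable, of ds]], of "dt * K"]] .
  moreover have "(\<Sum>j. \<bar>u (Suc (Suc j)) - u (Suc j)\<bar>) = TV u - \<bar>u 1 - u 0\<bar>"
    using suminf_split_head[OF u_TV[unfolded TV_finite_def]] unfolding TV_def by simp
  ultimately have bound_sum:
      "suminf bound = (1 - lam) * (TV u - \<bar>u 1 - u 0\<bar>) + lam * TV u + dt * K * mass ds u"
    and bound_summable: "summable bound"
    by (simp_all add: sums_iff)
  have tail: "summable (\<lambda>j. \<bar>v (Suc (Suc j)) - v (Suc j)\<bar>)"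
    by (rule summable_comparison_test'[OF bound_summable])
      (use TV_interior_increment_le in \<open>simp add: bound_def\<close>)
  then show TV_v: "TV_finite v"
    using summable_Suc_iff[of "\<lambda>j. \<bar>v (Suc j) - v j\<bar>"] by (simp add: TV_finite_def)
  have "TV v = \<bar>v 1 - v 0\<bar> + (\<Sum>j. \<bar>v (Suc (Suc j)) - v (Suc j)\<bar>)"
    using suminf_split_head[OF TV_v[unfolded TV_finite_def]] unfolding TV_def by simp
  moreover have "(\<Sum>j. \<bar>v (Suc (Suc j)) - v (Suc j)\<bar>) \<le> suminf bound"
    by (rule suminf_le[OF _ tail bound_summable])
      (use TV_interior_increment_le in \<open>simp add: bound_def\<close>)
  moreover have "(1 - lam) * \<bar>u 1 - u 0\<bar> + suminf bound = TV u + dt * K * mass ds u"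
    unfolding bound_sum by (simp add: algebra_simps)
  ultimately show "TV v \<le> TV u + dt * K * mass ds u + \<bar>u 0 - v 0\<bar> + dt * P * u 0"
    using TV_boundary_increment_le by linarith
qed

lemma weighted_mass_step:
  "\<bar>weighted_mass ds q v - weighted_mass ds q u\<bar> \<le> dt * P * TV u + dt * P^2 * mass ds u"
proof -
  define increment where
    "increment j = ds * q (Suc j) * v (Suc j) - ds * q (Suc j) * u (Suc j)" for j
  define bound where "bound j = dt * P * \<bar>u (Suc j) - u j\<bar> + dt * P^2 * (ds * u (Suc j))" for j
  have increment_le: "\<bar>increment j\<bar> \<le> bound j" for j
  proof -
    have "v (Suc j) - u (Suc j) = - lam * (u (Suc j) - u j) - dt * q (Suc j) * u (Suc j)"
      using upwind[of "Suc j"] by simp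
    then have "increment j
        = ds * q (Suc j) * (- lam * (u (Suc j) - u j) - dt * q (Suc j) * u (Suc j))"
      unfolding increment_def by (metis right_diff_distrib)
    then have split: "increment j
        = - (dt * q (Suc j) * (u (Suc j) - u j)) - dt * (q (Suc j))^2 * (ds * u (Suc j))"
      by (simp add: ds_times_lam[symmetric] algebra_simps power2_eq_square)
    have "0 \<le> q (Suc j)" "q (Suc j) \<le> P"
      using q_bounds[of "Suc j"] by auto
    moreover have "0 \<le> ds * u (Suc j)"
      using ds_pos u_nonneg[of "Suc j"] by simp
    ultimately have "\<bar>dt * q (Suc j) * (u (Suc j) - u j)\<bar> \<le> dt * P * \<bar>u (Suc j) - u j\<bar>"
      and "0 \<le> dt * (q (Suc j))^2 * (ds * u (Suc j))"
      and "dt * (q (Suc j))^2 * (ds * u (Suc j)) \<le> dt * P^2 * (ds * u (Suc j))"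
      using dt_pos by (auto simp: abs_mult intro!: mult_right_mono mult_left_mono power_mono)
    then show ?thesis
      unfolding split bound_def by (simp add: abs_le_iff)
  qed
  have bound_sums: "bound sums (dt * P * TV u + dt * P^2 * mass ds u)"
    unfolding bound_def TV_def mass_def using u_TV u_summable
    by (intro sums_add sums_mult summable_sums summable_mult) (auto simp: TV_finite_def)
  have "summable (\<lambda>j. ds * q (Suc j) * v (Suc j))" "summable (\<lambda>j. ds * q (Suc j) * u (Suc j))"
    using summable_weighted_mass[of ds v q P] summable_weighted_mass[of ds u q P]
      ds_pos u_nonneg v_nonneg v_summable u_summable q_bounds by auto
  then have "weighted_mass ds q v - weighted_mass ds q u = suminf increment"
    unfolding weighted_mass_def increment_def by (rule suminf_diff)
  also have "\<bar>suminf increment\<bar> \<le> suminf bound"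
    using increment_le bound_sums by (intro norm_suminf_le[where 'a=real, unfolded real_norm_def])
      (auto simp: sums_iff)
  finally show ?thesis
    using bound_sums by (simp add: sums_iff)
qed

end

section \<open>Delay term and discrete Gronwall inequality\<close>

definition history :: "(real \<Rightarrow> real) \<Rightarrow> real \<Rightarrow> (nat \<Rightarrow> real) \<Rightarrow> nat \<Rightarrow> real" where
  "history al dt N m = (\<Sum>k<m. N k * al (real (m - k) * dt))"

lemma history_increment_le:
  fixes al N :: "_ \<Rightarrow> real"
  assumes dt: "dt > 0" and N: "\<And>k. 0 \<le> N k \<and> N k \<le> B"
    and A: "\<And>t. t \<ge> 0 \<Longrightarrow> \<bar>al t\<bar> \<le> A"
    and V: "\<And>m t. (\<forall>i\<le>m. 0 \<le> t i) \<and> (\<forall>i<m. t i \<le> t (Suc i)) \<Longrightarrow>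
      (\<Sum>i<m. \<bar>al (t (Suc i)) - al (t i)\<bar>) \<le> V"
  shows "\<bar>history al dt N (Suc m) - history al dt N m\<bar> \<le> B * (A + V)"
proof -
  define jump where "jump k = al (real (Suc m - k) * dt) - al (real (m - k) * dt)" for k
  have split: "history al dt N (Suc m) - history al dt N m = N m * al dt + (\<Sum>k<m. N k * jump k)"
    unfolding history_def jump_def
    by (simp add: Suc_diff_le sum_subtractf[symmetric] right_diff_distrib)
  have "(\<Sum>k<m. \<bar>jump k\<bar>) = (\<Sum>i<m. \<bar>al (real (Suc (Suc i)) * dt) - al (real (Suc i) * dt)\<bar>)"
    by (subst sum.nat_diff_reindex[symmetric]) (auto simp: jump_def Suc_diff_Suc intro!: sum.cong)
  also have "\<dots> \<le> V"
    using V[of m "\<lambda>i. real (Suc i) * dt"] dt by (simp add: mult_right_mono)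
  finally have jumps: "(\<Sum>k<m. \<bar>jump k\<bar>) \<le> V" .
  have "\<bar>\<Sum>k<m. N k * jump k\<bar> \<le> (\<Sum>k<m. B * \<bar>jump k\<bar>)"
    using N by (intro order_trans[OF sum_abs sum_mono]) (auto simp: abs_mult intro: mult_right_mono)
  also have "\<dots> \<le> B * V"
    using jumps N[of 0] by (simp add: sum_distrib_left[symmetric] mult_left_mono)
  finally have "\<bar>\<Sum>k<m. N k * jump k\<bar> \<le> B * V" .
  moreover have "\<bar>N m * al dt\<bar> \<le> B * A"
    using N[of m] A[of dt] dt by (simp add: abs_mult mult_mono)
  ultimately show ?thesis
    unfolding split by (simp add: algebra_simps abs_triangle_ineq order_trans[OF abs_triangle_ineq])
qed

text \<open>Closes the implicit loop between the increments \<open>\<xi>\<close> of X and \<open>\<delta>\<close> of N: each bounds the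
  other, and smallness of \<open>h a b\<close> lets half of \<open>\<delta>\<close> be absorbed.\<close>

lemma coupled_increment_le:
  fixes \<xi> \<delta> a b c e h :: real
  assumes "\<xi> \<le> h / 2 * a * \<delta> + c" "\<delta> \<le> b * \<xi> + e" "h * a * b \<le> 1" "0 \<le> b" "0 \<le> \<delta>"
  shows "\<delta> \<le> 2 * (b * c + e)"
proof -
  have "b * \<xi> \<le> b * (h / 2 * a * \<delta> + c)"
    using assms(1,4) by (rule mult_left_mono)
  also have "\<dots> = (h * a * b) / 2 * \<delta> + b * c"
    by (simp add: algebra_simps)
  finally have "b * \<xi> \<le> (h * a * b) / 2 * \<delta> + b * c" .
  moreover have "(h * a * b) / 2 * \<delta> \<le> \<delta> / 2"
    using mult_right_mono[OF assms(3,5)] by simp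
  ultimately have "\<delta> \<le> 2 * (b * c) + 2 * e"
    using assms(2) by linarith
  then show ?thesis
    by simp
qed

lemma discrete_gronwall_exp:
  fixes a :: "nat \<Rightarrow> real"
  assumes nonneg: "\<And>k. 0 \<le> a k" and step: "\<And>k. a (Suc k) \<le> (1 + c * h) * a k"
  shows "a m \<le> exp (c * (real m * h)) * a 0"
proof (induction m)
  case 0
  show ?case by simp
next
  case (Suc m)
  have "a (Suc m) \<le> exp (c * h) * a m"
    using step[of m] exp_ge_add_one_self[of "c * h"] nonneg[of m]
    by (meson mult_right_mono order_trans)
  also have "\<dots> \<le> exp (c * h) * (exp (c * (real m * h)) * a 0)"
    using Suc by (simp add: mult_left_mono)
  also have "\<dots> = exp (c * (real (Suc m) * h)) * a 0"
    by (simp add: mult_exp_exp[symmetric] algebra_simps)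
  finally show ?case .
qed

lemma W1inf_lipschitz:
  assumes "W1inf p"
  obtains K where "0 \<le> K"
    and "\<And>s s' x x'. 0 \<le> s \<Longrightarrow> 0 \<le> s' \<Longrightarrow> 0 \<le> x \<Longrightarrow> 0 \<le> x' \<Longrightarrow>
      \<bar>p s x - p s' x'\<bar> \<le> K * dist (s, x) (s', x')"
proof -
  from assms obtain K where K: "K-lipschitz_on quadrant (\<lambda>(s, x). p s x)"
    unfolding W1inf_def by blast
  show ?thesis
  proof (rule that)
    show "0 \<le> K"
      using K by (rule lipschitz_on_nonneg)
    fix s s' x x' :: real
    assume "0 \<le> s" "0 \<le> s'" "0 \<le> x" "0 \<le> x'"
    then have "(s, x) \<in> quadrant" "(s', x') \<in> quadrant"
      by (simp_all add: quadrant_def)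
    from lipschitz_onD[OF K this] show "\<bar>p s x - p s' x'\<bar> \<le> K * dist (s, x) (s', x')"
      by (simp add: dist_real_def)
  qed
qed

lemma W1inf_abs_le_pinf:
  assumes "W1inf p" "0 \<le> s" "0 \<le> x"
  shows "\<bar>p s x\<bar> \<le> pinf p"
proof -
  obtain B where "\<forall>z\<in>quadrant. \<bar>(\<lambda>(s, x). p s x) z\<bar> \<le> B"
    using assms(1) unfolding W1inf_def bounded_iff by fastforce
  then have "bdd_above ((\<lambda>z. \<bar>(\<lambda>(s, x). p s x) z\<bar>) ` quadrant)"
    by (intro bdd_aboveI[of _ B]) auto
  moreover have "(s, x) \<in> quadrant"
    using assms by (simp add: quadrant_def)
  ultimately show ?thesis
    unfolding pinf_def using cSUP_upper by fastforce
qed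

lemma W1inf_difference_quotients_bdd_above:
  assumes "W1inf p"
  shows "bdd_above ((\<lambda>z. case z of (s, x, y) \<Rightarrow> \<bar>p s x - p s y\<bar> / \<bar>x - y\<bar>)
    ` {(s, x, y). s \<ge> 0 \<and> x \<ge> 0 \<and> y \<ge> 0 \<and> x \<noteq> y})"
proof -
  obtain K where "0 \<le> K"
    and K: "\<And>s s' x x'. 0 \<le> s \<Longrightarrow> 0 \<le> s' \<Longrightarrow> 0 \<le> x \<Longrightarrow> 0 \<le> x' \<Longrightarrow>
      \<bar>p s x - p s' x'\<bar> \<le> K * dist (s, x) (s', x')"
    by (rule W1inf_lipschitz[OF assms]) (rule that)
  have quotient_le: "\<bar>p s x - p s y\<bar> / \<bar>x - y\<bar> \<le> K" if "0 \<le> s" "0 \<le> x" "0 \<le> y" "x \<noteq> y" for s x y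
  proof -
    have "\<bar>p s x - p s y\<bar> \<le> K * \<bar>x - y\<bar>"
      using K[of s s x y] that by (simp add: dist_Pair_Pair dist_real_def)
    with that(4) show ?thesis
      by (simp add: pos_divide_le_eq)
  qed
  show ?thesis
  proof (rule bdd_aboveI2)
    fix z :: "real \<times> real \<times> real"
    assume "z \<in> {(s, x, y). s \<ge> 0 \<and> x \<ge> 0 \<and> y \<ge> 0 \<and> x \<noteq> y}"
    then show "(case z of (s, x, y) \<Rightarrow> \<bar>p s x - p s y\<bar> / \<bar>x - y\<bar>) \<le> K"
      using quotient_le by (auto split: prod.splits)
  qed
qed

lemma W1inf_lipschitz_in_X:
  assumes "W1inf p" "0 \<le> s" "0 \<le> x" "0 \<le> y"
  shows "\<bar>p s x - p s y\<bar> \<le> dXpinf p * \<bar>x - y\<bar>"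
proof (cases "x = y")
  case False
  then have "\<bar>p s x - p s y\<bar> / \<bar>x - y\<bar> \<le> dXpinf p"
    unfolding dXpinf_def using assms
    by (intro cSUP_upper2[OF W1inf_difference_quotients_bdd_above[OF assms(1)], of "(s, x, y)"])
      auto
  with False show ?thesis
    by (simp add: divide_le_eq)
qed simp

lemma W1inf_dXpinf_nonneg:
  assumes "W1inf p"
  shows "0 \<le> dXpinf p"
  unfolding dXpinf_def
  by (intro cSUP_upper2[OF W1inf_difference_quotients_bdd_above[OF assms], of "(0, 0, 1)"]) auto

locale ddm_coefficients =
  fixes p :: "real \<Rightarrow> real \<Rightarrow> real" and \<alpha> :: "real \<Rightarrow> real" and P K D A V :: real
  assumes p_bounds: "\<And>s x. 0 \<le> s \<Longrightarrow> 0 \<le> x \<Longrightarrow> 0 \<le> p s x \<and> p s x \<le> P"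
    and p_lipschitz_s: "\<And>s s' x. 0 \<le> s \<Longrightarrow> 0 \<le> s' \<Longrightarrow> 0 \<le> x \<Longrightarrow> \<bar>p s x - p s' x\<bar> \<le> K * \<bar>s - s'\<bar>"
    and p_lipschitz_X: "\<And>s x y. 0 \<le> s \<Longrightarrow> 0 \<le> x \<Longrightarrow> 0 \<le> y \<Longrightarrow> \<bar>p s x - p s y\<bar> \<le> D * \<bar>x - y\<bar>"
    and K_nonneg: "0 \<le> K" and D_nonneg: "0 \<le> D"
    and \<alpha>0_nonneg: "0 \<le> \<alpha> 0"
    and \<alpha>_bound: "\<And>t. 0 \<le> t \<Longrightarrow> \<bar>\<alpha> t\<bar> \<le> A"
    and \<alpha>_variation: "\<And>m t. (\<forall>i\<le>m. 0 \<le> t i) \<and> (\<forall>i<m. t i \<le> t (Suc i)) \<Longrightarrow>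
      (\<Sum>i<m. \<bar>\<alpha> (t (Suc i)) - \<alpha> (t i)\<bar>) \<le> V"
begin

lemma P_nonneg: "0 \<le> P"
  using p_bounds[of 0 0] by simp

lemma A_nonneg: "0 \<le> A"
  using \<alpha>_bound[of 0] by simp

lemma V_nonneg: "0 \<le> V"
  using \<alpha>_variation[of 0 "\<lambda>_. 0"] by simp

end

lemma ddm_coefficients_of_W1inf:
  assumes W: "W1inf p" and p_nonneg: "\<forall>s\<ge>0. \<forall>x\<ge>0. p s x \<ge> 0"
    and \<alpha>_nonneg: "\<forall>t\<ge>0. \<alpha> t \<ge> 0" and \<alpha>_bounded: "bounded (\<alpha> ` {0..})"
    and \<alpha>_BV: "bounded_variation_on {0..} \<alpha>"
  obtains K A V where "ddm_coefficients p \<alpha> (pinf p) K (dXpinf p) A V"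
proof -
  obtain K where K: "0 \<le> K" "\<And>s s' x x'. 0 \<le> s \<Longrightarrow> 0 \<le> s' \<Longrightarrow> 0 \<le> x \<Longrightarrow> 0 \<le> x' \<Longrightarrow>
      \<bar>p s x - p s' x'\<bar> \<le> K * dist (s, x) (s', x')"
    by (rule W1inf_lipschitz[OF W]) (rule that)
  obtain A where "\<And>t. 0 \<le> t \<Longrightarrow> \<bar>\<alpha> t\<bar> \<le> A"
    using \<alpha>_bounded unfolding bounded_iff by auto
  moreover obtain V where "\<And>m t. (\<forall>i\<le>m. 0 \<le> t i) \<and> (\<forall>i<m. t i \<le> t (Suc i)) \<Longrightarrow>
      (\<Sum>i<m. \<bar>\<alpha> (t (Suc i)) - \<alpha> (t i)\<bar>) \<le> V"
    using \<alpha>_BV unfolding bounded_variation_on_def by auto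
  moreover have "\<bar>p s x - p s' x\<bar> \<le> K * \<bar>s - s'\<bar>" if "0 \<le> s" "0 \<le> s'" "0 \<le> x" for s s' x
    using K(2)[OF that(1,2,3,3)] by (simp add: dist_Pair_Pair dist_real_def)
  ultimately show ?thesis
  proof (intro that[of K A V] ddm_coefficients.intro)
    fix s x :: real
    assume "0 \<le> s" "0 \<le> x"
    then show "0 \<le> p s x \<and> p s x \<le> pinf p"
      using p_nonneg W1inf_abs_le_pinf[OF W] by (simp add: abs_le_iff)
  qed (use K(1) \<alpha>_nonneg W1inf_lipschitz_in_X[OF W] W1inf_dXpinf_nonneg[OF W] in auto)
qed

definition tv_rate :: "real \<Rightarrow> real \<Rightarrow> real \<Rightarrow> real \<Rightarrow> real \<Rightarrow> real \<Rightarrow> real" where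
  "tv_rate P K D A V M = 2 * P + K * M + 3 * P^2 * M + 2 * D * M * (P * M * (A + V)) + 1"

lemma (in ddm_coefficients) tv_rate_pos: "0 \<le> M \<Longrightarrow> 0 < tv_rate P K D A V M"
proof -
  assume "0 \<le> M"
  then have "0 \<le> K * M" "0 \<le> 3 * P^2 * M" "0 \<le> 2 * D * M * (P * M * (A + V))"
    using P_nonneg K_nonneg D_nonneg A_nonneg V_nonneg by simp_all
  then show ?thesis
    unfolding tv_rate_def using P_nonneg by linarith
qed

section \<open>Total variation along the DDM scheme\<close>

locale ddm_run = ddm_coefficients +
  fixes ds dt :: real and n :: "nat \<Rightarrow> nat \<Rightarrow> real" and X N :: "nat \<Rightarrow> real"
  assumes scheme: "DDM_scheme p \<alpha> ds dt n X N"
    and ds_pos: "ds > 0" and dt_pos: "dt > 0"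
    and cfl: "dt / ds + dt * P \<le> 1"
    and dt_small: "dt * \<alpha> 0 * (D * mass ds (n 0)) \<le> 1"
    and initial_nonneg: "\<And>j. j \<ge> 1 \<Longrightarrow> 0 \<le> n 0 j"
    and initial_summable: "summable (\<lambda>j. n 0 (Suc j))"
    and initial_TV: "TV_finite (n 0)"
begin

abbreviation M :: real where "M \<equiv> mass ds (n 0)"

definition rate :: "nat \<Rightarrow> nat \<Rightarrow> real" where
  "rate k j = p (sgrid ds j) (X k)"

lemma X_0: "X 0 = 0"
  and X_Suc_nonneg: "0 \<le> X (Suc k)"
  and boundary: "n k 0 = N k"
  and upwind:
    "j \<ge> 1 \<Longrightarrow> n (Suc k) j = n k j - dt / ds * (n k j - n k (j - 1)) - dt * rate k j * n k j"
  using scheme unfolding DDM_scheme_def rate_def by blast+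

lemma N_eq: "N k = weighted_mass ds (rate k) (n k)"
proof (cases k)
  case 0
  have "N 0 = (\<Sum>j. ds * p (sgrid ds (Suc j)) 0 * n 0 (Suc j))"
    using scheme unfolding DDM_scheme_def by blast
  with 0 X_0 show ?thesis
    by (simp add: weighted_mass_def rate_def)
next
  case (Suc m)
  have "N (Suc m) = (\<Sum>j. ds * p (sgrid ds (Suc j)) (X (Suc m)) * n (Suc m) (Suc j))"
    using scheme unfolding DDM_scheme_def by blast
  with Suc show ?thesis
    by (simp add: weighted_mass_def rate_def)
qed

lemma X_Suc: "X (Suc k) = dt / 2 * (\<alpha> 0 * N (Suc k) + history \<alpha> dt N (Suc k))"
proof -
  have "X (Suc k) = dt / 2 * (\<alpha> 0 * (\<Sum>j. ds * p (sgrid ds (Suc j)) (X (Suc k)) * n (Suc k) (Suc j))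
      + (\<Sum>i\<le>k. N i * \<alpha> (real (Suc k - i) * dt)))"
    and "N (Suc k) = (\<Sum>j. ds * p (sgrid ds (Suc j)) (X (Suc k)) * n (Suc k) (Suc j))"
    using scheme unfolding DDM_scheme_def by blast+
  then show ?thesis
    by (simp only: history_def lessThan_Suc_atMost)
qed

lemma X_nonneg: "0 \<le> X k"
  using X_0 X_Suc_nonneg by (cases k) auto

lemma sgrid_nonneg: "j \<ge> 1 \<Longrightarrow> 0 \<le> sgrid ds j"
  using ds_pos by (simp add: sgrid_def)

lemma rate_bounds: "j \<ge> 1 \<Longrightarrow> 0 \<le> rate k j \<and> rate k j \<le> P"
  unfolding rate_def using p_bounds sgrid_nonneg X_nonneg by blast

lemma rate_lipschitz_s: "j \<ge> 1 \<Longrightarrow> \<bar>rate k (Suc j) - rate k j\<bar> \<le> K * ds"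
  using p_lipschitz_s[of "sgrid ds (Suc j)" "sgrid ds j" "X k"] sgrid_nonneg X_nonneg ds_pos
  by (simp add: rate_def sgrid_def algebra_simps)

lemma rate_lipschitz_X: "j \<ge> 1 \<Longrightarrow> \<bar>rate k' j - rate k j\<bar> \<le> D * \<bar>X k' - X k\<bar>"
  unfolding rate_def using p_lipschitz_X sgrid_nonneg X_nonneg by blast

lemma upwind_step_at:
  assumes "\<forall>j. 0 \<le> n k j" "summable (\<lambda>j. n k (Suc j))" "TV_finite (n k)"
  shows "upwind_step (n k) (n (Suc k)) (rate k) (dt / ds) dt ds P K"
  using assms ds_pos dt_pos cfl rate_bounds rate_lipschitz_s upwind
  by unfold_locales auto

lemma scheme_invariant:
  "(\<forall>j. 0 \<le> n k j) \<and> summable (\<lambda>j. n k (Suc j)) \<and> TV_finite (n k) \<and> mass ds (n k) = M"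
proof (induction k)
  case 0
  have "0 \<le> n 0 0"
    using boundary N_eq weighted_mass_nonneg[of ds "n 0" "rate 0" P] ds_pos initial_nonneg
      initial_summable rate_bounds by simp
  then show ?case
    using initial_nonneg initial_summable initial_TV by (metis less_one not_le)
next
  case (Suc k)
  then interpret step: upwind_step "n k" "n (Suc k)" "rate k" "dt / ds" dt ds P K
    by (intro upwind_step_at) auto
  have "0 \<le> n (Suc k) 0"
    using boundary N_eq weighted_mass_nonneg[of ds "n (Suc k)" "rate (Suc k)" P] ds_pos
      step.v_nonneg step.v_summable rate_bounds by simp
  then show ?case
    using step.v_nonneg step.v_summable step.TV_finite_v step.mass_balance Suc.IH boundary N_eq
    by (metis diff_self add_diff_cancel_right' less_one not_le)
qed

lemma upwind_step_invariant:
  "upwind_step (n k) (n (Suc k)) (rate k) (dt / ds) dt ds P K"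
  using scheme_invariant upwind_step_at by blast

lemma M_nonneg: "0 \<le> M"
  using mass_nonneg[of ds "n 0"] ds_pos initial_nonneg initial_summable by simp

lemma N_bounds: "0 \<le> N k \<and> N k \<le> P * M"
  using N_eq scheme_invariant[of k] rate_bounds ds_pos
    weighted_mass_nonneg[of ds "n k" "rate k" P] weighted_mass_le[of ds "n k" "rate k" P]
  by auto

lemma X_increment_le:
  "\<bar>X (Suc k) - X k\<bar> \<le> dt / 2 * \<alpha> 0 * \<bar>N (Suc k) - N k\<bar> + dt * (P * M * (A + V))"
proof -
  let ?H = "history \<alpha> dt N"
  \<comment> \<open>\<open>X 0 = 0\<close> is not given by the formula for \<open>X (Suc k)\<close>, hence a correction at \<open>k = 0\<close>\<close>
  define start where "start = (if k = 0 then \<alpha> 0 * N 0 else 0)"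
  have increment:
    "X (Suc k) - X k = dt / 2 * (\<alpha> 0 * (N (Suc k) - N k) + (?H (Suc k) - ?H k) + start)"
    using X_Suc[of k] X_Suc[of "k - 1"] X_0
    by (cases k) (simp_all add: start_def history_def algebra_simps)
  have "\<bar>\<alpha> 0 * (N (Suc k) - N k) + (?H (Suc k) - ?H k) + start\<bar>
      \<le> \<alpha> 0 * \<bar>N (Suc k) - N k\<bar> + P * M * (A + V) + A * (P * M)"
  proof -
    have "\<bar>\<alpha> 0 * (N (Suc k) - N k)\<bar> = \<alpha> 0 * \<bar>N (Suc k) - N k\<bar>"
      using \<alpha>0_nonneg by (simp add: abs_mult)
    moreover have "\<bar>?H (Suc k) - ?H k\<bar> \<le> P * M * (A + V)"
      using history_increment_le[OF dt_pos N_bounds \<alpha>_bound \<alpha>_variation] .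
    moreover have "0 \<le> start" "start \<le> A * (P * M)"
      using \<alpha>_bound[of 0] \<alpha>0_nonneg N_bounds[of 0] by (auto simp: start_def intro: mult_mono)
    ultimately show ?thesis
      by linarith
  qed
  then have "\<bar>X (Suc k) - X k\<bar> \<le> dt / 2 * (\<alpha> 0 * \<bar>N (Suc k) - N k\<bar> + P * M * (A + V) + A * (P * M))"
    unfolding increment abs_mult using dt_pos by (simp add: mult_left_mono)
  also have "\<dots> \<le> dt / 2 * \<alpha> 0 * \<bar>N (Suc k) - N k\<bar> + dt * (P * M * (A + V))"
    using dt_pos P_nonneg M_nonneg V_nonneg by (simp add: algebra_simps)
  finally show ?thesis .
qed

lemma N_increment_le:
  "\<bar>N (Suc k) - N k\<bar> \<le> D * M * \<bar>X (Suc k) - X k\<bar> + dt * (P * TV (n k) + P^2 * M)"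
proof -
  interpret step: upwind_step "n k" "n (Suc k)" "rate k" "dt / ds" dt ds P K
    by (rule upwind_step_invariant)
  have "\<bar>weighted_mass ds (rate (Suc k)) (n (Suc k)) - weighted_mass ds (rate k) (n (Suc k))\<bar>
      \<le> D * \<bar>X (Suc k) - X k\<bar> * mass ds (n (Suc k))"
    using ds_pos step.v_nonneg step.v_summable rate_bounds rate_lipschitz_X
    by (intro weighted_mass_coefficient_diff[where q = "rate k" and q' = "rate (Suc k)" and P = P])
      auto
  moreover have "\<bar>weighted_mass ds (rate k) (n (Suc k)) - weighted_mass ds (rate k) (n k)\<bar>
      \<le> dt * P * TV (n k) + dt * P^2 * mass ds (n k)"
    by (rule step.weighted_mass_step)
  ultimately show ?thesis
    using N_eq[of k] N_eq[of "Suc k"] scheme_invariant[of k] scheme_invariant[of "Suc k"]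
    by (simp add: algebra_simps)
qed

lemma TV_step_le: "TV (n (Suc k)) + 1 \<le> (1 + tv_rate P K D A V M * dt) * (TV (n k) + 1)"
proof -
  interpret step: upwind_step "n k" "n (Suc k)" "rate k" "dt / ds" dt ds P K
    by (rule upwind_step_invariant)
  define T where "T = TV (n k)"
  define c where "c = P * M * (A + V)"
  have "dt * P * N k \<le> dt * P * (P * M)"
    using N_bounds dt_pos P_nonneg by (simp add: mult_left_mono)
  then have TV_next: "TV (n (Suc k)) \<le> T + dt * K * M + \<bar>N (Suc k) - N k\<bar> + dt * P * (P * M)"
    using step.TV_v_le scheme_invariant[of k] boundary[of k] boundary[of "Suc k"]
    by (simp add: T_def abs_minus_commute)
  have "\<bar>N (Suc k) - N k\<bar> \<le> 2 * (D * M * (dt * c) + dt * (P * T + P^2 * M))"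
    unfolding T_def c_def
    by (rule coupled_increment_le[OF X_increment_le N_increment_le dt_small])
      (use D_nonneg M_nonneg in simp_all)
  moreover have "T + dt * K * M + 2 * (D * M * (dt * c) + dt * (P * T + P^2 * M)) + dt * P * (P * M)
      = T + dt * (2 * P * T + (K * M + 2 * D * M * c + 3 * P^2 * M))"
    by (simp add: algebra_simps power2_eq_square)
  moreover have "2 * P * T + (K * M + 2 * D * M * c + 3 * P^2 * M)
      \<le> tv_rate P K D A V M * T + tv_rate P K D A V M"
  proof -
    have "0 \<le> T" "0 \<le> K * M" "0 \<le> 2 * D * M * c" "0 \<le> 3 * P^2 * M"
      using TV_nonneg scheme_invariant K_nonneg D_nonneg M_nonneg P_nonneg A_nonneg V_nonneg
      by (simp_all add: T_def c_def)
    then have "2 * P * T \<le> tv_rate P K D A V M * T"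
      by (intro mult_right_mono) (simp_all add: tv_rate_def c_def)
    moreover have "K * M + 2 * D * M * c + 3 * P^2 * M \<le> tv_rate P K D A V M"
      using P_nonneg by (simp add: tv_rate_def c_def)
    ultimately show ?thesis
      by linarith
  qed
  then have "dt * (2 * P * T + (K * M + 2 * D * M * c + 3 * P^2 * M))
      \<le> dt * (tv_rate P K D A V M * T + tv_rate P K D A V M)"
    using dt_pos by (simp add: mult_left_mono)
  moreover have "(1 + tv_rate P K D A V M * dt) * (T + 1)
      = T + 1 + dt * (tv_rate P K D A V M * T + tv_rate P K D A V M)"
    by (simp add: algebra_simps)
  ultimately show ?thesis
    using TV_next unfolding T_def by linarith
qed

lemma TV_growth: "TV (n m) + 1 \<le> exp (tv_rate P K D A V M * (real m * dt)) * (TV (n 0) + 1)"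
  using TV_nonneg scheme_invariant TV_step_le
  by (intro discrete_gronwall_exp[where a = "\<lambda>k. TV (n k) + 1"]) (auto simp: add_nonneg_pos)

end

text \<open>The constants use \<open>|L|\<close> so that they
  do not depend on the run; the hypotheses force \<open>L \<ge> 0\<close>.\<close>

lemma (in ddm_coefficients) DDM_TV_bound:
  assumes "ds > 0" "dt > 0" "dt \<le> 1 / (\<alpha> 0 * D * \<bar>L\<bar> + 1)"
    and "\<forall>j\<ge>1. n 0 j \<ge> 0" "summable (\<lambda>j. ds * \<bar>n 0 (Suc j)\<bar>)" "norm1 ds (n 0) = L"
    and "TV_finite (n 0)" "dt < inverse (1 / ds + P)" "DDM_scheme p \<alpha> ds dt n X N"
  shows "TV_finite (n m) \<and>
    TV (n m) \<le> exp (tv_rate P K D A V \<bar>L\<bar> * (real m * dt)) * TV (n 0)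
      + 1 * (exp (tv_rate P K D A V \<bar>L\<bar> * (real m * dt)) - 1)"
proof -
  have nonneg: "\<And>j. j \<ge> 1 \<Longrightarrow> 0 \<le> n 0 j"
    using assms(4) by simp
  have abs_eq: "\<bar>n 0 (Suc j)\<bar> = n 0 (Suc j)" for j
    using nonneg[of "Suc j"] by simp
  have summable: "summable (\<lambda>j. n 0 (Suc j))"
    using assms(1,5) unfolding abs_eq by (simp add: summable_cmult_iff)
  have mass: "mass ds (n 0) = \<bar>L\<bar>"
    using assms(1,6) mass_nonneg[of ds "n 0"] nonneg summable
    by (simp add: norm1_def mass_def abs_eq)
  have "0 < 1 / ds + P"
    using assms(1) P_nonneg by (simp add: add_pos_nonneg)
  with assms(8) have "dt * (1 / ds + P) < 1"
    by (simp add: field_simps)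
  then have cfl: "dt / ds + dt * P \<le> 1"
    by (simp add: algebra_simps)
  have "0 \<le> \<alpha> 0 * D * \<bar>L\<bar>"
    using \<alpha>0_nonneg D_nonneg by simp
  with assms(3) have "dt * (\<alpha> 0 * D * \<bar>L\<bar> + 1) \<le> 1"
    by (simp add: field_simps)
  then have small: "dt * \<alpha> 0 * (D * mass ds (n 0)) \<le> 1"
    using assms(2) unfolding mass by (simp add: algebra_simps)
  interpret ddm_run p \<alpha> P K D A V ds dt n X N
    using assms(1,2,7,9) cfl small nonneg summable by unfold_locales auto
  show ?thesis
    using TV_growth[of m] scheme_invariant[of m] unfolding mass by (simp add: algebra_simps)
qed

theorem mainTheorem13:
  fixes p :: "real \<Rightarrow> real \<Rightarrow> real" and \<alpha> :: "real \<Rightarrow> real" and L1 Linf :: real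
  assumes "W1inf p"
    and "\<forall>s\<ge>0. \<forall>x\<ge>0. p s x \<ge> 0"
    and "\<forall>t\<ge>0. \<alpha> t \<ge> 0"
    and "bounded (\<alpha> ` {0..})"
    and "bounded_variation_on {0..} \<alpha>"
  shows "\<exists>\<tau>0 C1 C2. \<tau>0 > 0 \<and> C1 > 0 \<and> C2 > 0 \<and>
    (\<forall>ds dt (n :: nat \<Rightarrow> nat \<Rightarrow> real) X N.
       ds > 0 \<and> dt > 0 \<and> dt \<le> \<tau>0 \<and>
       (\<forall>j\<ge>1. n 0 j \<ge> 0) \<and>
       summable (\<lambda>j. ds * \<bar>n 0 (Suc j)\<bar>) \<and> norm1 ds (n 0) = L1 \<and>
       bdd_above (range (\<lambda>j. \<bar>n 0 (Suc j)\<bar>)) \<and> norminf (n 0) = Linf \<and>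
       TV_finite (n 0) \<and>
       DDM_CFL p \<alpha> ds dt (n 0) \<and>
       DDM_scheme p \<alpha> ds dt n X N
       \<longrightarrow> (\<forall>m. TV_finite (n m) \<and>
              TV (n m) \<le> exp (C1 * (real m * dt)) * TV (n 0)
                          + C2 * (exp (C1 * (real m * dt)) - 1)))"
proof -
  obtain K A V where coefficients: "ddm_coefficients p \<alpha> (pinf p) K (dXpinf p) A V"
    by (rule ddm_coefficients_of_W1inf[OF assms])
  interpret ddm_coefficients p \<alpha> "pinf p" K "dXpinf p" A V
    by (fact coefficients)
  define \<tau> where "\<tau> = 1 / (\<alpha> 0 * dXpinf p * \<bar>L1\<bar> + 1)"
  define C where "C = tv_rate (pinf p) K (dXpinf p) A V \<bar>L1\<bar>"
  have "0 \<le> \<alpha> 0 * dXpinf p * \<bar>L1\<bar>"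
    using \<alpha>0_nonneg D_nonneg by simp
  then have \<tau>_pos: "0 < \<tau>"
    unfolding \<tau>_def by simp
  have C_pos: "0 < C"
    unfolding C_def by (simp add: tv_rate_pos)
  show ?thesis
  proof (rule exI[of _ \<tau>], rule exI[of _ C], rule exI[of _ "1::real"],
      intro conjI[OF \<tau>_pos conjI[OF C_pos conjI[OF zero_less_one]]] allI impI,
      unfold DDM_CFL_def \<tau>_def C_def, elim conjE)
  qed (rule DDM_TV_bound[where L = L1]; assumption)
qed

end
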